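(* For every order $N\in\mathbb N_{\ge3}$ and mode dimensions $D_1,\dots,D_N\in\mathbb N_{\ge2}$, there exist a ground truth $\mathcal W^*\in\mathbb R^{D_1\times\cdots\times D_N}$ and a set of observed entries $\Omega\subset[D_1]\times\cdots\times[D_N]$, defining the loss $\mathcal L(\mathcal W)=\frac1{|\Omega|}\sum_{(d_1,\dots,d_N)\in\Omega}(\mathcal W_{d_1,\dots,d_N}-\mathcal W^*_{d_1,\dots,d_N})^2$, such that for every mode tree $\mathcal T$ over $[N]$ the set $$\mathcal R_{\mathcal T}:=\big\{(\mathrm{rank}\,[\![\mathcal W;\nu]\!])_{\nu\in\mathcal T\setminus\{[N]\}}:\ \mathcal W\in\mathbb R^{D_1\times\cdots\times D_N},\ \mathcal L(\mathcal W)=0\big\}$$ contains elements $(R_\nu)_\nu$ and $(R'_\nu)_\nu$ such that: (i) there is no $(R''_\nu)_\nu\in\mathcal R_{\mathcal T}\setminus\{(R_\nu)_\nu,(R'_\nu)_\nu\}$ with $(R''_\nu)_\nu\le(R_\nu)_\nu$ or $(R''_\nu)_\nu\le(R'_\nu)_\nu$; and (ii) neither $(R_\nu)_\nu\le(R'_\nu)_\nu$ nor $(R'_\nu)_\nu\le(R_\nu)_\nu$. Here $\le$ is the entrywise (product) partial order on tuples indexed by $\mathcal T\setminus\{[N]\}$.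
   Context: $[K]:=\{1,\dots,K\}$. A mode tree $\mathcal T$ over $[N]$ is a rooted tree whose nodes are labeled by subsets of $[N]$, with exactly $N$ leaves labeled $\{1\},\dots,\{N\}$, and where each interior node's label is the union of its children's labels; nodes are identified with their labels (so $\mathcal T\subset 2^{[N]}$) and the root is $[N]$. The matricization $[\![\mathcal W;I]\!]$ of $\mathcal W\in\mathbb R^{D_1\times\cdots\times D_N}$ w.r.t. $I\subset[N]$ is its arrangement as a $\prod_{i\in I}D_i\times\prod_{j\notin I}D_j$ matrix whose rows are indexed by the modes in $I$ and columns by the remaining modes (entry $\mathcal W_{d_1,\dots,d_N}$ goes to row $1+\sum_l(d_{i_l}-1)\prod_{l'<l}D_{i_{l'}}$ and column $1+\sum_l(d_{j_l}-1)\prod_{l'<l}D_{j_{l'}}$, where $I=\{i_1<\cdots\}$, $[N]\setminus I=\{j_1<\cdots\}$). The tuple $(\mathrm{rank}\,[\![\mathcal W;\nu]\!])_{\nu\in\mathcal T\setminus\{[N]\}}$ is the hierarchical tensor rank of $\mathcal W$ w.r.t. $\mathcal T$. *)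

theory Defs
  imports Main "Jordan_Normal_Form.DL_Rank"
begin

text \<open>Modes are 1,...,N; a tensor of order N with mode dimensions D 1,...,D N is a
  function from index functions to reals. Its entries are the values on the index
  functions d with d i in {1..D i} for i in {1..N} and d i = 0 otherwise.\<close>

type_synonym tensor = "(nat \<Rightarrow> nat) \<Rightarrow> real"

definition tensor_idx :: "nat \<Rightarrow> (nat \<Rightarrow> nat) \<Rightarrow> (nat \<Rightarrow> nat) set" where
  "tensor_idx N D = {d. (\<forall>i\<in>{1..N}. d i \<in> {1..D i}) \<and> (\<forall>i. i \<notin> {1..N} \<longrightarrow> d i = 0)}"

text \<open>Mixed-radix decoding: inverse of the row/column index formula of the matricization
  (0-based row index r corresponds to the paper's row r+1).\<close>
definition mdecode :: "nat set \<Rightarrow> (nat \<Rightarrow> nat) \<Rightarrow> nat \<Rightarrow> nat \<Rightarrow> nat" where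
  "mdecode I D r i = 1 + (r div (\<Prod>i'\<in>{i'\<in>I. i' < i}. D i')) mod D i"

definition matricize :: "nat \<Rightarrow> (nat \<Rightarrow> nat) \<Rightarrow> tensor \<Rightarrow> nat set \<Rightarrow> real mat" where
  "matricize N D W I = mat (\<Prod>i\<in>I. D i) (\<Prod>j\<in>{1..N} - I. D j)
     (\<lambda>(r, c). W (\<lambda>i. if i \<in> I then mdecode I D r i
                      else if i \<in> {1..N} then mdecode ({1..N} - I) D c i else 0))"

definition mat_rank :: "real mat \<Rightarrow> nat" where
  "mat_rank A = vec_space.rank (dim_row A) A"

text \<open>Mode trees over a set S of modes, with nodes identified with their labels:
  either a single leaf {i}, or a root S whose children subtrees are mode trees over the
  blocks of a partition of S.\<close>
inductive mode_tree :: "nat set \<Rightarrow> nat set set \<Rightarrow> bool" where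
  leaf: "mode_tree {i} {{i}}"
| node: "\<lbrakk> finite P; P \<noteq> {}; \<forall>B\<in>P. B \<noteq> {}; pairwise disjnt P; \<Union>P = S;
           \<forall>B\<in>P. mode_tree B (Tt B) \<rbrakk> \<Longrightarrow> mode_tree S (insert S (\<Union>B\<in>P. Tt B))"

definition loss :: "nat \<Rightarrow> (nat \<Rightarrow> nat) \<Rightarrow> tensor \<Rightarrow> (nat \<Rightarrow> nat) set \<Rightarrow> tensor \<Rightarrow> real" where
  "loss N D Wstar \<Omega> W = (1 / real (card \<Omega>)) * (\<Sum>d\<in>\<Omega>. (W d - Wstar d)\<^sup>2)"

text \<open>Hierarchical tensor rank, as a tuple indexed by T - {[N]} (value 0 outside).\<close>
definition htrank :: "nat \<Rightarrow> (nat \<Rightarrow> nat) \<Rightarrow> nat set set \<Rightarrow> tensor \<Rightarrow> (nat set \<Rightarrow> nat)" where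
  "htrank N D T W = (\<lambda>\<nu>. if \<nu> \<in> T - {{1..N}} then mat_rank (matricize N D W \<nu>) else 0)"

definition rank_set :: "nat \<Rightarrow> (nat \<Rightarrow> nat) \<Rightarrow> nat set set \<Rightarrow> tensor \<Rightarrow> (nat \<Rightarrow> nat) set
                        \<Rightarrow> (nat set \<Rightarrow> nat) set" where
  "rank_set N D T Wstar \<Omega> = {htrank N D T W | W. loss N D Wstar \<Omega> W = 0}"

definition tuple_le :: "nat \<Rightarrow> nat set set \<Rightarrow> (nat set \<Rightarrow> nat) \<Rightarrow> (nat set \<Rightarrow> nat) \<Rightarrow> bool" where
  "tuple_le N T R R' = (\<forall>\<nu>\<in>T - {{1..N}}. R \<nu> \<le> R' \<nu>)"

end

theory Submission
  imports Defs "Jordan_Normal_Form.DL_Rank_Submatrix"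
begin

text \<open>Let W(k, m) be the tensor that is e1 \<otimes> e1 + e2 \<otimes> e2 in the modes 1 and k, constant in
  mode m and e1 in all other modes. The ground truth is W(2, 3), observed at the four entries whose
  modes 1, 2, 3 carry (1,1,1), (2,2,2), (1,2,2), (2,1,1) and all other modes 1; W(3, 2) fits
  these entries too. A matricization of W(k, m) has rank at most 1 unless it separates the modes 1
  and k, and rank at most 2 in any case, with rank 2 at the leaf {k}; hence the rank tuples of
  W(2, 3) and W(3, 2) are incomparable, as seen at the leaves {2} and {3}.

  Both tuples are minimal: let W fit the observations with rank tuple below that of W(k, m). Every
  rank of W is at least 1 since W(1,1,1) = 1. Its rank at the leaf {m} is at most 1, and then the
  vanishing 2 \<times> 2 minors of rank-one matricizations, applied to the observed entries, force rank
  at least 2 at every node separating 1 and k. So the two tuples coincide.\<close>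

lemma det_dim_2:
  assumes "A \<in> carrier_mat 2 2"
  shows "det A = A $$ (0, 0) * A $$ (1, 1) - A $$ (0, 1) * A $$ (1, 0)"
  using assms by (subst laplace_expansion_column[OF assms, of 0])
    (auto simp: cofactor_def mat_delete_def numeral_2_eq_2 lessThan_Suc det_single)

lemma pick_doubleton:
  assumes "a < (b::nat)"
  shows "pick {a, b} 0 = a" and "pick {a, b} 1 = b"
proof -
  show a: "pick {a, b} 0 = a"
    using assms by (auto intro!: Least_equality)
  have "pick {a, b} 1 = (LEAST x. x \<in> {a, b} \<and> a < x)"
    using a by simp
  also have "\<dots> = b"
    using assms by (auto intro!: Least_equality)
  finally show "pick {a, b} 1 = b" .
qed

lemma mat_rank_ge_1_if_nonzero_entry:
  fixes A :: "real mat"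
  assumes A: "A \<in> carrier_mat n nc" and "r < n" "c < nc" and "A $$ (r, c) \<noteq> 0"
  shows "1 \<le> mat_rank A"
proof -
  have card: "card {i. i < n \<and> i \<in> {r}} = 1" "card {j. j < nc \<and> j \<in> {c}} = 1"
    using assms(2,3) by (auto simp: card_1_singleton_iff)
  then have S: "submatrix A {r} {c} \<in> carrier_mat 1 1"
    using A by (auto simp: dim_submatrix)
  have "submatrix A {r} {c} $$ (0, 0) = A $$ (r, c)"
    using submatrix_index[of 0 A "{r}" 0 "{c}"] A card by (auto simp: Least_equality)
  then have "det (submatrix A {r} {c}) \<noteq> 0"
    using assms(4) det_single[OF S] by simp
  then show ?thesis
    using vec_space.rank_gt_minor[OF A] A card by (fastforce simp: mat_rank_def)
qed

lemma mat_rank_ge_2_if_minor_nonzero: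
  fixes A :: "real mat"
  assumes A: "A \<in> carrier_mat n nc" and "r1 < n" "r2 < n" "c1 < nc" "c2 < nc"
    and minor: "A $$ (r1, c1) * A $$ (r2, c2) \<noteq> A $$ (r1, c2) * A $$ (r2, c1)"
  shows "2 \<le> mat_rank A"
proof -
  have sorted_case: "2 \<le> mat_rank A"
    if "i1 < i2" "i2 < n" "j1 < j2" "j2 < nc"
      and "A $$ (i1, j1) * A $$ (i2, j2) \<noteq> A $$ (i1, j2) * A $$ (i2, j1)" for i1 i2 j1 j2
  proof -
    let ?S = "submatrix A {i1, i2} {j1, j2}"
    have "{i. i < n \<and> i \<in> {i1, i2}} = {i1, i2}" "{j. j < nc \<and> j \<in> {j1, j2}} = {j1, j2}"
      using that(1-4) by auto
    then have card: "card {i. i < n \<and> i \<in> {i1, i2}} = 2" "card {j. j < nc \<and> j \<in> {j1, j2}} = 2"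
      using that(1,3) by simp_all
    then have S: "?S \<in> carrier_mat 2 2"
      using A by (auto simp: dim_submatrix)
    have entry: "?S $$ (i, j) = A $$ (pick {i1, i2} i, pick {j1, j2} j)" if "i < 2" "j < 2" for i j
      using submatrix_index[of i A "{i1, i2}" j "{j1, j2}"] that A card by auto
    have "det ?S = A $$ (i1, j1) * A $$ (i2, j2) - A $$ (i1, j2) * A $$ (i2, j1)"
      using det_dim_2[OF S] entry[of 0 0] entry[of 1 1] entry[of 0 1] entry[of 1 0]
        pick_doubleton[OF that(1)] pick_doubleton[OF that(3)]
      by (simp del: pick.simps)
    then have "det ?S \<noteq> 0"
      using that(5) by simp
    then show ?thesis
      using vec_space.rank_gt_minor[OF A] A card by (fastforce simp: mat_rank_def)
  qed
  have "r1 \<noteq> r2" "c1 \<noteq> c2"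
    using minor by auto
  then show ?thesis
    using sorted_case[of r1 r2 c1 c2] sorted_case[of r2 r1 c1 c2]
      sorted_case[of r1 r2 c2 c1] sorted_case[of r2 r1 c2 c1] assms(2-6)
    by (auto simp: linorder_neq_iff mult.commute)
qed

lemma mdecode_insert_max_self:
  assumes "\<forall>a\<in>A. a < b" and "e < (\<Prod>a\<in>A. D a)" and "t < D b"
  shows "mdecode (insert b A) D (e + t * (\<Prod>a\<in>A. D a)) b = t + 1"
proof -
  have "{a\<in>insert b A. a < b} = A"
    using assms(1) by auto
  then show ?thesis
    using assms(2,3) by (simp add: mdecode_def)
qed

lemma mdecode_insert_max_other:
  assumes "finite A" and "\<forall>a\<in>A. a < b" and "i \<in> A" and "\<forall>a\<in>A. 0 < D a"
  shows "mdecode (insert b A) D (e + t * (\<Prod>a\<in>A. D a)) i = mdecode A D e i"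
proof -
  define Q where "Q = (\<Prod>a\<in>{a\<in>A. a < i}. D a)"
  define Q' where "Q' = (\<Prod>a\<in>{a\<in>A. i < a}. D a)"
  have "A = {a\<in>A. a < i} \<union> insert i {a\<in>A. i < a}"
    using assms(3) by auto
  then have "(\<Prod>a\<in>A. D a) = prod D ({a\<in>A. a < i} \<union> insert i {a\<in>A. i < a})"
    by simp
  also have "\<dots> = Q * (D i * Q')"
    unfolding Q_def Q'_def using assms(1) by (subst prod.union_disjoint) auto
  finally have eq: "e + t * (\<Prod>a\<in>A. D a) = e + (t * Q' * D i) * Q"
    by (simp add: ac_simps)
  have "0 < Q"
    unfolding Q_def using assms(4) by (simp add: prod_pos)
  then have "(e + t * (\<Prod>a\<in>A. D a)) div Q = t * Q' * D i + e div Q"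
    unfolding eq by simp
  then have "(e + t * (\<Prod>a\<in>A. D a)) div Q mod D i = e div Q mod D i"
    by simp
  moreover have "{a\<in>insert b A. a < i} = {a\<in>A. a < i}"
    using assms(2,3) by auto
  ultimately show ?thesis
    unfolding mdecode_def Q_def by simp
qed

lemma mdecode_surj:
  assumes "finite I" and "\<forall>i\<in>I. x i \<in> {1..D i}"
  shows "\<exists>r < (\<Prod>i\<in>I. D i). \<forall>i\<in>I. mdecode I D r i = x i"
  using assms
proof (induction I rule: finite_linorder_max_induct)
  case empty
  then show ?case by simp
next
  case (insert b A)
  define P where "P = (\<Prod>i\<in>A. D i)"
  obtain e where e: "e < P" "\<forall>i\<in>A. mdecode A D e i = x i"
    using insert.IH insert.prems unfolding P_def by auto
  have x_b: "x b \<in> {1..D b}"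
    using insert.prems by blast
  \<comment> \<open>b exceeds all modes of A, so it carries the most significant digit\<close>
  define r where "r = e + (x b - 1) * P"
  have "r < P + (x b - 1) * P"
    using e(1) by (simp add: r_def)
  also have "\<dots> = x b * P"
    using x_b by (cases "x b") auto
  also have "\<dots> \<le> (\<Prod>i\<in>insert b A. D i)"
    using x_b insert.hyps by (auto simp: P_def)
  finally have "r < (\<Prod>i\<in>insert b A. D i)" .
  moreover have "mdecode (insert b A) D r b = x b"
  proof -
    have "x b - 1 < D b"
      using x_b by auto
    then have "mdecode (insert b A) D r b = x b - 1 + 1"
      unfolding r_def P_def using insert.hyps(2) e(1)[unfolded P_def] by (intro mdecode_insert_max_self)
    then show ?thesis
      using x_b by simp
  qed
  moreover have "mdecode (insert b A) D r i = x i" if "i \<in> A" for i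
  proof -
    have "\<forall>a\<in>A. 0 < D a"
      using insert.prems by fastforce
    then have "mdecode (insert b A) D r i = mdecode A D e i"
      unfolding r_def P_def by (intro mdecode_insert_max_other[OF insert.hyps that])
    then show ?thesis
      using e(2) that by simp
  qed
  ultimately show ?case
    by blast
qed

definition glue :: "nat \<Rightarrow> nat set \<Rightarrow> (nat \<Rightarrow> nat) \<Rightarrow> (nat \<Rightarrow> nat) \<Rightarrow> nat \<Rightarrow> nat" where
  "glue N \<nu> x y = (\<lambda>i. if i \<in> \<nu> then x i else if i \<in> {1..N} then y i else 0)"

lemma glue_same: "x \<in> tensor_idx N D \<Longrightarrow> glue N \<nu> x x = x"
  unfolding glue_def tensor_idx_def by auto

lemma tensor_idx_mdecode_surj:
  assumes "x \<in> tensor_idx N D" and "I \<subseteq> {1..N}"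
  obtains r where "r < (\<Prod>i\<in>I. D i)" and "\<forall>i\<in>I. mdecode I D r i = x i"
proof -
  have "\<forall>i\<in>I. x i \<in> {1..D i}"
    using assms unfolding tensor_idx_def by blast
  then show ?thesis
    using mdecode_surj[of I x D] assms(2) finite_subset that by blast
qed

lemma matricize_carrier:
  "matricize N D W \<nu> \<in> carrier_mat (\<Prod>i\<in>\<nu>. D i) (\<Prod>j\<in>{1..N} - \<nu>. D j)"
  unfolding matricize_def by simp

lemma mat_rank_matricize:
  "mat_rank (matricize N D W \<nu>) = vec_space.rank (\<Prod>i\<in>\<nu>. D i) (matricize N D W \<nu>)"
  by (simp add: mat_rank_def matricize_carrier[THEN carrier_matD(1)])

lemma matricize_index:
  assumes "r < (\<Prod>i\<in>\<nu>. D i)" and "c < (\<Prod>j\<in>{1..N} - \<nu>. D j)"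
  shows "matricize N D W \<nu> $$ (r, c) = W (glue N \<nu> (mdecode \<nu> D r) (mdecode ({1..N} - \<nu>) D c))"
  using assms unfolding matricize_def glue_def by simp

lemma matricize_index_glue:
  assumes "r < (\<Prod>i\<in>\<nu>. D i)" and "c < (\<Prod>j\<in>{1..N} - \<nu>. D j)"
    and "\<forall>i\<in>\<nu>. mdecode \<nu> D r i = x i" and "\<forall>j\<in>{1..N} - \<nu>. mdecode ({1..N} - \<nu>) D c j = y j"
  shows "matricize N D W \<nu> $$ (r, c) = W (glue N \<nu> x y)"
proof -
  have "glue N \<nu> (mdecode \<nu> D r) (mdecode ({1..N} - \<nu>) D c) = glue N \<nu> x y"
    using assms(3,4) unfolding glue_def by auto
  then show ?thesis
    using matricize_index[OF assms(1,2)] by simp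
qed

lemma matricize_rank_ge_1:
  assumes "\<nu> \<subseteq> {1..N}" and p: "p \<in> tensor_idx N D" and "W p \<noteq> 0"
  shows "1 \<le> mat_rank (matricize N D W \<nu>)"
proof -
  obtain r where r: "r < (\<Prod>i\<in>\<nu>. D i)" "\<forall>i\<in>\<nu>. mdecode \<nu> D r i = p i"
    using tensor_idx_mdecode_surj[OF p assms(1)] .
  obtain c where c: "c < (\<Prod>j\<in>{1..N} - \<nu>. D j)" "\<forall>j\<in>{1..N} - \<nu>. mdecode ({1..N} - \<nu>) D c j = p j"
    using tensor_idx_mdecode_surj[OF p, of "{1..N} - \<nu>"] by blast
  have "matricize N D W \<nu> $$ (r, c) = W p"
    using matricize_index_glue[OF r(1) c(1) r(2) c(2)] glue_same[OF p] by simp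
  then show ?thesis
    using mat_rank_ge_1_if_nonzero_entry[OF matricize_carrier r(1) c(1)] assms(3) by simp
qed

text \<open>The vanishing 2 \<times> 2 minor with the rows of p, p' and the columns of p, p'.\<close>

lemma matricize_rank_le_1_exchange:
  assumes "\<nu> \<subseteq> {1..N}" and p: "p \<in> tensor_idx N D" and p': "p' \<in> tensor_idx N D"
    and rank: "mat_rank (matricize N D W \<nu>) \<le> 1"
  shows "W p * W p' = W (glue N \<nu> p p') * W (glue N \<nu> p' p)"
proof -
  obtain r where r: "r < (\<Prod>i\<in>\<nu>. D i)" "\<forall>i\<in>\<nu>. mdecode \<nu> D r i = p i"
    using tensor_idx_mdecode_surj[OF p assms(1)] .
  obtain r' where r': "r' < (\<Prod>i\<in>\<nu>. D i)" "\<forall>i\<in>\<nu>. mdecode \<nu> D r' i = p' i"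
    using tensor_idx_mdecode_surj[OF p' assms(1)] .
  obtain c where c: "c < (\<Prod>j\<in>{1..N} - \<nu>. D j)" "\<forall>j\<in>{1..N} - \<nu>. mdecode ({1..N} - \<nu>) D c j = p j"
    using tensor_idx_mdecode_surj[OF p, of "{1..N} - \<nu>"] by blast
  obtain c' where c': "c' < (\<Prod>j\<in>{1..N} - \<nu>. D j)" "\<forall>j\<in>{1..N} - \<nu>. mdecode ({1..N} - \<nu>) D c' j = p' j"
    using tensor_idx_mdecode_surj[OF p', of "{1..N} - \<nu>"] by blast
  let ?A = "matricize N D W \<nu>"
  have "?A $$ (r, c) * ?A $$ (r', c') = ?A $$ (r, c') * ?A $$ (r', c)"
    using mat_rank_ge_2_if_minor_nonzero[OF matricize_carrier[of N D W \<nu>] r(1) r'(1) c(1) c'(1)] rank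
    by fastforce
  then show ?thesis
    using matricize_index_glue[OF r(1) c(1) r(2) c(2)] matricize_index_glue[OF r'(1) c'(1) r'(2) c'(2)]
      matricize_index_glue[OF r(1) c'(1) r(2) c'(2)] matricize_index_glue[OF r'(1) c(1) r'(2) c(2)]
      glue_same[OF p] glue_same[OF p'] by simp
qed

lemma matricize_rank_le_1_if_separable:
  assumes W: "\<And>x. W x = F x * G x"
    and F: "\<And>x x'. \<forall>i\<in>\<nu>. x i = x' i \<Longrightarrow> F x = F x'"
    and G: "\<And>y y'. \<forall>j\<in>{1..N} - \<nu>. y j = y' j \<Longrightarrow> G y = G y'"
  shows "mat_rank (matricize N D W \<nu>) \<le> 1"
  unfolding mat_rank_matricize
proof (rule vec_space.rank_le_1_product_entries[OF matricize_carrier,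
      where f = "\<lambda>r. F (mdecode \<nu> D r)" and g = "\<lambda>c. G (mdecode ({1..N} - \<nu>) D c)"])
  fix r c
  assume "r < dim_row (matricize N D W \<nu>)" and "c < dim_col (matricize N D W \<nu>)"
  then have "matricize N D W \<nu> $$ (r, c) =
      W (glue N \<nu> (mdecode \<nu> D r) (mdecode ({1..N} - \<nu>) D c))"
    using matricize_carrier[of N D W \<nu>] by (simp add: matricize_index)
  also have "\<dots> = F (mdecode \<nu> D r) * G (mdecode ({1..N} - \<nu>) D c)"
    unfolding W by (intro arg_cong2[where f = "(*)"] F G) (auto simp: glue_def)
  finally show "matricize N D W \<nu> $$ (r, c) = F (mdecode \<nu> D r) * G (mdecode ({1..N} - \<nu>) D c)" .
qed

lemma matricize_rank_add_le:
  "mat_rank (matricize N D (\<lambda>x. V x + W x) \<nu>) \<le>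
     mat_rank (matricize N D V \<nu>) + mat_rank (matricize N D W \<nu>)"
proof -
  have "matricize N D (\<lambda>x. V x + W x) \<nu> = matricize N D V \<nu> + matricize N D W \<nu>"
    unfolding matricize_def by (rule eq_matI) auto
  then show ?thesis
    unfolding mat_rank_matricize
    using vec_space.rank_subadditive[OF matricize_carrier matricize_carrier] by simp
qed

definition cylinder :: "nat set \<Rightarrow> (nat \<Rightarrow> nat) \<Rightarrow> tensor" where
  "cylinder S c x = (if \<forall>i\<in>S. x i = c i then 1 else 0)"

lemma cylinder_split: "cylinder S c x = cylinder (S \<inter> \<nu>) c x * cylinder (S - \<nu>) c x"
  unfolding cylinder_def by auto

lemma cylinder_cong: "\<forall>i\<in>S. x i = x' i \<Longrightarrow> cylinder S c x = cylinder S c x'"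
  unfolding cylinder_def by auto

lemma matricize_rank_cylinder_le_1:
  assumes "S \<subseteq> {1..N}"
  shows "mat_rank (matricize N D (cylinder S c) \<nu>) \<le> 1"
  using assms
  by (intro matricize_rank_le_1_if_separable[of _ "cylinder (S \<inter> \<nu>) c" "cylinder (S - \<nu>) c"])
    (auto simp: cylinder_split[symmetric] intro!: cylinder_cong)

lemma matricize_rank_cylinder_sum_le_1:
  assumes "S \<subseteq> {1..N}" and "(\<forall>i\<in>S \<inter> \<nu>. c i = c' i) \<or> (\<forall>i\<in>S - \<nu>. c i = c' i)"
  shows "mat_rank (matricize N D (\<lambda>x. cylinder S c x + cylinder S c' x) \<nu>) \<le> 1"
  using assms(2)
proof
  assume "\<forall>i\<in>S \<inter> \<nu>. c i = c' i"
  then have "cylinder (S \<inter> \<nu>) c' = cylinder (S \<inter> \<nu>) c"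
    unfolding cylinder_def by auto
  then show ?thesis
    using assms(1)
    by (intro matricize_rank_le_1_if_separable[of _ "cylinder (S \<inter> \<nu>) c"
          "\<lambda>x. cylinder (S - \<nu>) c x + cylinder (S - \<nu>) c' x"])
      (auto simp: cylinder_split[of S _ _ \<nu>] algebra_simps intro!: cylinder_cong arg_cong2[where f = "(+)"])
next
  assume "\<forall>i\<in>S - \<nu>. c i = c' i"
  then have "cylinder (S - \<nu>) c' = cylinder (S - \<nu>) c"
    unfolding cylinder_def by auto
  then show ?thesis
    using assms(1)
    by (intro matricize_rank_le_1_if_separable[of _
          "\<lambda>x. cylinder (S \<inter> \<nu>) c x + cylinder (S \<inter> \<nu>) c' x" "cylinder (S - \<nu>) c"])
      (auto simp: cylinder_split[of S _ _ \<nu>] algebra_simps intro!: cylinder_cong arg_cong2[where f = "(+)"])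
qed

lemma loss_eq_0_iff:
  assumes "finite \<Omega>" and "\<Omega> \<noteq> {}"
  shows "loss N D Wstar \<Omega> W = 0 \<longleftrightarrow> (\<forall>d\<in>\<Omega>. W d = Wstar d)"
proof -
  have "loss N D Wstar \<Omega> W = 0 \<longleftrightarrow> (\<Sum>d\<in>\<Omega>. (W d - Wstar d)\<^sup>2) = 0"
    unfolding loss_def using assms by simp
  also have "\<dots> \<longleftrightarrow> (\<forall>d\<in>\<Omega>. W d = Wstar d)"
    using assms(1) by (simp add: sum_nonneg_eq_0_iff)
  finally show ?thesis .
qed

definition probe :: "nat \<Rightarrow> nat \<Rightarrow> nat \<Rightarrow> nat \<Rightarrow> nat \<Rightarrow> nat \<Rightarrow> nat \<Rightarrow> nat" where
  "probe N k m a b c = (\<lambda>i. if i = 1 then a else if i = k then b else if i = m then c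
     else if i \<in> {1..N} then 1 else 0)"

definition data_points :: "nat \<Rightarrow> nat \<Rightarrow> nat \<Rightarrow> (nat \<Rightarrow> nat) set" where
  "data_points N k m = {probe N k m 1 1 1, probe N k m 2 2 2, probe N k m 1 2 2, probe N k m 2 1 1}"

definition fits_data :: "nat \<Rightarrow> nat \<Rightarrow> nat \<Rightarrow> tensor \<Rightarrow> bool" where
  "fits_data N k m W \<longleftrightarrow> W (probe N k m 1 1 1) = 1 \<and> W (probe N k m 2 2 2) = 1 \<and>
     W (probe N k m 1 2 2) = 0 \<and> W (probe N k m 2 1 1) = 0"

definition diag_tensor :: "nat \<Rightarrow> nat \<Rightarrow> nat \<Rightarrow> tensor" where
  "diag_tensor N k m = (\<lambda>x. cylinder ({1..N} - {m}) (\<lambda>_. 1) x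
     + cylinder ({1..N} - {m}) (\<lambda>i. if i = 1 \<or> i = k then 2 else 1) x)"

lemma matricize_diag_tensor_rank_le_1:
  assumes "1 \<in> \<nu> \<longleftrightarrow> k \<in> \<nu>"
  shows "mat_rank (matricize N D (diag_tensor N k m) \<nu>) \<le> 1"
proof -
  let ?S = "{1..N} - {m}" and ?c = "\<lambda>i. if i = 1 \<or> i = k then 2 else 1 :: nat"
  have "(\<forall>i\<in>?S \<inter> \<nu>. 1 = ?c i) \<or> (\<forall>i\<in>?S - \<nu>. 1 = ?c i)"
    using assms by (cases "1 \<in> \<nu>") auto
  then show ?thesis
    unfolding diag_tensor_def by (intro matricize_rank_cylinder_sum_le_1) auto
qed

lemma matricize_diag_tensor_rank_le_2: "mat_rank (matricize N D (diag_tensor N k m) \<nu>) \<le> 2"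
proof -
  let ?S = "{1..N} - {m}"
  have sum: "mat_rank (matricize N D (diag_tensor N k m) \<nu>) \<le>
      mat_rank (matricize N D (cylinder ?S (\<lambda>_. 1)) \<nu>)
      + mat_rank (matricize N D (cylinder ?S (\<lambda>i. if i = 1 \<or> i = k then 2 else 1)) \<nu>)"
    unfolding diag_tensor_def by (rule matricize_rank_add_le)
  have cylinder: "mat_rank (matricize N D (cylinder ?S c) \<nu>) \<le> 1" for c
    by (rule matricize_rank_cylinder_le_1) auto
  show ?thesis
    using order_trans[OF sum add_mono[OF cylinder cylinder]] by simp
qed

locale three_modes =
  fixes N k m :: nat and D :: "nat \<Rightarrow> nat"
  assumes k: "k \<in> {2..N}" and m: "m \<in> {2..N}" and k_neq_m: "k \<noteq> m"
    and D: "\<forall>i\<in>{1..N}. 2 \<le> D i"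
begin

lemma modes_distinct [simp]:
  "k \<noteq> 1" "1 \<noteq> k" "k \<noteq> Suc 0" "Suc 0 \<noteq> k" "m \<noteq> 1" "1 \<noteq> m" "m \<noteq> Suc 0" "Suc 0 \<noteq> m"
  "k \<noteq> m" "m \<noteq> k"
  using k m k_neq_m by auto

lemma probe_swap: "probe N m k a b c = probe N k m a c b"
  by (rule ext) (simp add: probe_def)

lemma fits_data_swap: "fits_data N m k = fits_data N k m"
  by (simp add: fun_eq_iff fits_data_def probe_swap)

lemma probe_in_tensor_idx:
  assumes "a \<in> {1, 2}" and "b \<in> {1, 2}" and "c \<in> {1, 2}"
  shows "probe N k m a b c \<in> tensor_idx N D"
  using assms k m D by (fastforce simp: tensor_idx_def probe_def)

lemma data_points_subset: "data_points N k m \<subseteq> tensor_idx N D"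
  by (simp add: data_points_def probe_in_tensor_idx)

lemma glue_probe:
  assumes "\<nu> \<subseteq> {1..N}"
  shows "glue N \<nu> (probe N k m a b c) (probe N k m a' b' c') =
    probe N k m (if 1 \<in> \<nu> then a else a') (if k \<in> \<nu> then b else b') (if m \<in> \<nu> then c else c')"
  using assms k m by (intro ext) (auto simp: glue_def probe_def)

lemma diag_tensor_probe:
  "diag_tensor N k m (probe N k m a b c) =
    (if a = 1 \<and> b = 1 then 1 else 0) + (if a = 2 \<and> b = 2 then 1 else 0)"
proof -
  have "(\<forall>i\<in>{1..N} - {m}. probe N k m a b c i = e i) \<longleftrightarrow> a = e 1 \<and> b = e k"
    if "\<forall>i. i \<noteq> 1 \<and> i \<noteq> k \<longrightarrow> e i = 1" for e
    using that k m by (auto simp: probe_def)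
  then show ?thesis
    by (simp add: diag_tensor_def cylinder_def)
qed

lemma fits_data_diag_tensor: "fits_data N k m (diag_tensor N k m)"
  by (simp add: fits_data_def diag_tensor_probe)

lemma rank_set_diag_tensor:
  "rank_set N D T (diag_tensor N k m) (data_points N k m) = {htrank N D T W | W. fits_data N k m W}"
proof -
  have "loss N D (diag_tensor N k m) (data_points N k m) W = 0 \<longleftrightarrow> fits_data N k m W" for W
    by (subst loss_eq_0_iff) (auto simp: data_points_def fits_data_def diag_tensor_probe)
  then show ?thesis
    unfolding rank_set_def by simp
qed

lemma matricize_diag_tensor_rank_ge_2: "2 \<le> mat_rank (matricize N D (diag_tensor N k m) {k})"
proof (rule ccontr)
  assume "\<not> ?thesis"
  then have "diag_tensor N k m (probe N k m 1 1 1) * diag_tensor N k m (probe N k m 2 2 2) =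
      diag_tensor N k m (probe N k m 2 1 2) * diag_tensor N k m (probe N k m 1 2 1)"
    using matricize_rank_le_1_exchange[of "{k}" N "probe N k m 1 1 1" D "probe N k m 2 2 2"] k
    by (simp add: probe_in_tensor_idx glue_probe)
  then show False
    by (simp add: diag_tensor_probe)
qed

lemma fits_data_matricize_rank_ge_1:
  assumes "fits_data N k m W" and "\<nu> \<subseteq> {1..N}"
  shows "1 \<le> mat_rank (matricize N D W \<nu>)"
  using assms by (intro matricize_rank_ge_1[of _ _ "probe N k m 1 1 1"])
    (auto simp: fits_data_def probe_in_tensor_idx)

text \<open>Rank at most 1 at {m} gives W(2,2,1) W(1,1,2) = W(1,1,1) W(2,2,2) = 1 on the probes. A split
  of rank at most 1 separating the modes 1 and k exchanges (2,2,1), (1,1,2) if it groups m with 1,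
  and (1,1,1), (2,2,2) if it groups m with k, into (1,2,2), (2,1,1), where W vanishes.\<close>

lemma fits_data_matricize_rank_ge_2:
  assumes fits: "fits_data N k m W" and rank_m: "mat_rank (matricize N D W {m}) \<le> 1"
    and \<nu>: "\<nu> \<subseteq> {1..N}" and separates: "\<not> (1 \<in> \<nu> \<longleftrightarrow> k \<in> \<nu>)"
  shows "2 \<le> mat_rank (matricize N D W \<nu>)"
proof (rule ccontr)
  assume "\<not> ?thesis"
  then have rank_\<nu>: "mat_rank (matricize N D W \<nu>) \<le> 1"
    by simp
  have exchange: "W (probe N k m a b c) * W (probe N k m a' b' c') =
      W (glue N \<mu> (probe N k m a b c) (probe N k m a' b' c')) *
      W (glue N \<mu> (probe N k m a' b' c') (probe N k m a b c))"
    if "\<mu> \<subseteq> {1..N}" "mat_rank (matricize N D W \<mu>) \<le> 1"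
      and "a \<in> {1, 2}" "b \<in> {1, 2}" "c \<in> {1, 2}" "a' \<in> {1, 2}" "b' \<in> {1, 2}" "c' \<in> {1, 2}"
    for \<mu> a b c a' b' c'
    using that by (intro matricize_rank_le_1_exchange) (auto simp: probe_in_tensor_idx)
  have swapped_probes: "W (probe N k m 2 2 1) * W (probe N k m 1 1 2) = 1"
    using exchange[of "{m}" 1 1 1 2 2 2] m rank_m fits by (simp add: glue_probe fits_data_def)
  consider "m \<in> \<nu> \<longleftrightarrow> 1 \<in> \<nu>" | "m \<in> \<nu> \<longleftrightarrow> k \<in> \<nu>"
    using separates by blast
  then show False
  proof cases
    case 1
    then show False
      using exchange[OF \<nu> rank_\<nu>, of 2 2 1 1 1 2] separates fits swapped_probes
      by (auto simp: glue_probe[OF \<nu>] fits_data_def)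
  next
    case 2
    then show False
      using exchange[OF \<nu> rank_\<nu>, of 1 1 1 2 2 2] separates fits
      by (auto simp: glue_probe[OF \<nu>] fits_data_def)
  qed
qed

lemma singleton_ne_all_modes: "{i} \<noteq> {1..N}"
proof
  assume "{i} = {1..N}"
  then have "1 \<in> {i}" and "2 \<in> {i}"
    using k by auto
  then show False
    by simp
qed

lemma htrank_diag_tensor_minimal:
  assumes nodes: "\<forall>\<nu>\<in>T. \<nu> \<subseteq> {1..N}" and m_leaf: "{m} \<in> T" and fits: "fits_data N k m W"
    and le: "tuple_le N T (htrank N D T W) (htrank N D T (diag_tensor N k m))"
  shows "htrank N D T W = htrank N D T (diag_tensor N k m)"
proof (rule ext)
  fix \<nu>
  let ?rank = "\<lambda>V \<mu>. mat_rank (matricize N D V \<mu>)"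
  have rank_le: "?rank W \<mu> \<le> ?rank (diag_tensor N k m) \<mu>" if "\<mu> \<in> T - {{1..N}}" for \<mu>
    using le that unfolding tuple_le_def htrank_def by auto
  have "?rank W \<nu> = ?rank (diag_tensor N k m) \<nu>" if \<nu>: "\<nu> \<in> T - {{1..N}}"
  proof (cases "1 \<in> \<nu> \<longleftrightarrow> k \<in> \<nu>")
    case True
    have "1 \<le> ?rank W \<nu>"
      using fits_data_matricize_rank_ge_1[OF fits] nodes \<nu> by blast
    then show ?thesis
      using rank_le[OF \<nu>] matricize_diag_tensor_rank_le_1[OF True, where N = N and D = D and m = m]
      by linarith
  next
    case False
    have "{m} \<in> T - {{1..N}}"
      using m_leaf singleton_ne_all_modes by blast
    moreover have "?rank (diag_tensor N k m) {m} \<le> 1"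
      by (rule matricize_diag_tensor_rank_le_1) simp
    ultimately have "?rank W {m} \<le> 1"
      using rank_le[of "{m}"] by linarith
    then have "2 \<le> ?rank W \<nu>"
      using fits_data_matricize_rank_ge_2[OF fits _ _ False] nodes \<nu> by blast
    then show ?thesis
      using rank_le[OF \<nu>] matricize_diag_tensor_rank_le_2[of N D k m \<nu>] by linarith
  qed
  then show "htrank N D T W \<nu> = htrank N D T (diag_tensor N k m) \<nu>"
    unfolding htrank_def by simp
qed

lemma htrank_diag_tensor_not_le_swapped:
  assumes "{k} \<in> T"
  shows "\<not> tuple_le N T (htrank N D T (diag_tensor N k m)) (htrank N D T (diag_tensor N m k))"
proof -
  have k_node: "{k} \<in> T - {{1..N}}"
    using assms singleton_ne_all_modes by blast
  have "mat_rank (matricize N D (diag_tensor N m k) {k}) \<le> 1"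
    by (rule matricize_diag_tensor_rank_le_1) simp
  then have "mat_rank (matricize N D (diag_tensor N m k) {k}) < mat_rank (matricize N D (diag_tensor N k m) {k})"
    using matricize_diag_tensor_rank_ge_2 by linarith
  then have "htrank N D T (diag_tensor N m k) {k} < htrank N D T (diag_tensor N k m) {k}"
    using k_node unfolding htrank_def by simp
  then show ?thesis
    using k_node unfolding tuple_le_def by (meson not_le)
qed

end

lemma mode_tree_node_subset: "mode_tree S T \<Longrightarrow> \<nu> \<in> T \<Longrightarrow> \<nu> \<subseteq> S"
proof (induction S T arbitrary: \<nu> rule: mode_tree.induct)
  case (leaf i)
  then show ?case by simp
next
  case (node P S Tt)
  show ?case
  proof (cases "\<nu> = S")
    case False
    then obtain B where "B \<in> P" "\<nu> \<in> Tt B"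
      using node.prems by blast
    then show ?thesis
      using node.IH node.hyps(5) by blast
  qed simp
qed

lemma mode_tree_leaf: "mode_tree S T \<Longrightarrow> i \<in> S \<Longrightarrow> {i} \<in> T"
proof (induction S T rule: mode_tree.induct)
  case (leaf i)
  then show ?case by simp
next
  case (node P S Tt)
  then obtain B where "B \<in> P" "i \<in> B"
    by blast
  then show ?case
    using node.IH by blast
qed

theorem proposition2:
  fixes N :: nat and D :: "nat \<Rightarrow> nat"
  assumes "N \<ge> 3" and "\<forall>i\<in>{1..N}. D i \<ge> 2"
  shows "\<exists>Wstar \<Omega>. \<Omega> \<subseteq> tensor_idx N D \<and> \<Omega> \<noteq> {} \<and>
           (\<forall>T. mode_tree {1..N} T \<longrightarrow>
              (\<exists>R R'. R \<in> rank_set N D T Wstar \<Omega> \<and> R' \<in> rank_set N D T Wstar \<Omega> \<and>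
                 \<not> (\<exists>R''\<in>rank_set N D T Wstar \<Omega> - {R, R'}.
                       tuple_le N T R'' R \<or> tuple_le N T R'' R') \<and>
                 \<not> tuple_le N T R R' \<and> \<not> tuple_le N T R' R))"
proof -
  interpret A: three_modes N 2 3 D
    using assms by unfold_locales auto
  interpret B: three_modes N 3 2 D
    using assms by unfold_locales auto
  let ?W = "diag_tensor N 2 3" and ?W' = "diag_tensor N 3 2" and ?\<Omega> = "data_points N 2 3"
  show ?thesis
  proof (intro exI[of _ ?W] exI[of _ ?\<Omega>] conjI allI impI)
    show "?\<Omega> \<subseteq> tensor_idx N D"
      by (rule A.data_points_subset)
    show "?\<Omega> \<noteq> {}"
      by (simp add: data_points_def)
    fix T
    assume T: "mode_tree {1..N} T"
    have nodes: "\<forall>\<nu>\<in>T. \<nu> \<subseteq> {1..N}" and leaves: "{2} \<in> T" "{3} \<in> T"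
      using mode_tree_node_subset[OF T] mode_tree_leaf[OF T] assms(1) by auto
    show "\<exists>R R'. R \<in> rank_set N D T ?W ?\<Omega> \<and> R' \<in> rank_set N D T ?W ?\<Omega> \<and>
        \<not> (\<exists>R''\<in>rank_set N D T ?W ?\<Omega> - {R, R'}. tuple_le N T R'' R \<or> tuple_le N T R'' R') \<and>
        \<not> tuple_le N T R R' \<and> \<not> tuple_le N T R' R"
    proof (rule exI[of _ "htrank N D T ?W"], rule exI[of _ "htrank N D T ?W'"], intro conjI)
      show "htrank N D T ?W \<in> rank_set N D T ?W ?\<Omega>" and "htrank N D T ?W' \<in> rank_set N D T ?W ?\<Omega>"
        using A.fits_data_diag_tensor B.fits_data_diag_tensor B.fits_data_swap
        by (auto simp: A.rank_set_diag_tensor)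
      show "\<not> (\<exists>R''\<in>rank_set N D T ?W ?\<Omega> - {htrank N D T ?W, htrank N D T ?W'}.
          tuple_le N T R'' (htrank N D T ?W) \<or> tuple_le N T R'' (htrank N D T ?W'))"
        using A.htrank_diag_tensor_minimal[OF nodes leaves(2)]
          B.htrank_diag_tensor_minimal[OF nodes leaves(1)] B.fits_data_swap
        by (auto simp: A.rank_set_diag_tensor)
      show "\<not> tuple_le N T (htrank N D T ?W) (htrank N D T ?W')"
        by (rule A.htrank_diag_tensor_not_le_swapped[OF leaves(1)])
      show "\<not> tuple_le N T (htrank N D T ?W') (htrank N D T ?W)"
        by (rule B.htrank_diag_tensor_not_le_swapped[OF leaves(2)])
    qed
  qed
qed

end
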